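(* Let $\nu\in\mathbb M$. The following are equivalent: (1) $\nu$ is ergodic with respect to $\mathbb S\times\mathbb O$; (2) for every $k\ge0$, $\theta_k[\nu]$ is ergodic with respect to $\mathbb S^{2^k}$; (3) there is $n\ge0$ such that $\theta_k[\nu]$ is ergodic with respect to $\mathbb S^{2^k}$ for every $k\ge n$.
   Context: $I=\{0,1\}$. $\mathbb S$ is the left shift on $I^{\mathbb Z}$; for a measure $\eta$, $\mathbb S^j\eta$ is the pushforward. $I^{\mathbb N}$ is the space of $0$–$1$ sequences $(\alpha_i)_{i\ge1}$ with uniform Bernoulli measure $m$; $\mathbb O$ is the odometer (addition of $1$ with carry to the right: if $\alpha_1=\dots=\alpha_{n-1}=1$, $\alpha_n=0$, then $\mathbb O[\alpha]_i=0$ for $i<n$, $\mathbb O[\alpha]_n=1$, $\mathbb O[\alpha]_i=\alpha_i$ for $i>n$). $\mathbb M$ is the set of Borel probability measures on $I^{\mathbb Z}\times I^{\mathbb N}$ invariant under $\mathbb S\times\mathbb O$. For $k\ge0$, $A_{0,k}=\{\alpha:\alpha_1=\dots=\alpha_k=0\}$, and $\theta_k[\nu]$ is the normalized projection to $I^{\mathbb Z}$ of the restriction of $\nu$ to $I^{\mathbb Z}\times A_{0,k}$; it is $\mathbb S^{2^k}$-invariant. *)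

theory Defs
  imports "HOL-Probability.Probability"
begin

definition ZS :: "(int \<Rightarrow> bool) measure" where
  "ZS = PiM UNIV (\<lambda>_. count_space UNIV)"

text \<open>The one-sided space I^N; a sequence (alpha_i)_{i>=1} is represented 0-based:
  alpha_{i+1} = a i.\<close>
definition NS :: "(nat \<Rightarrow> bool) measure" where
  "NS = PiM UNIV (\<lambda>_. count_space UNIV)"

definition shift :: "(int \<Rightarrow> bool) \<Rightarrow> (int \<Rightarrow> bool)" where
  "shift x = (\<lambda>i. x (i + 1))"

text \<open>Odometer: add 1 with carry to the right (the all-ones sequence goes to all zeros).\<close>
definition odometer :: "(nat \<Rightarrow> bool) \<Rightarrow> (nat \<Rightarrow> bool)" where
  "odometer a = (if \<forall>i. a i then (\<lambda>_. False)
     else (let n = (LEAST n. \<not> a n) in (\<lambda>i. if i < n then False else if i = n then True else a i)))"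

definition SO :: "(int \<Rightarrow> bool) \<times> (nat \<Rightarrow> bool) \<Rightarrow> (int \<Rightarrow> bool) \<times> (nat \<Rightarrow> bool)" where
  "SO p = (shift (fst p), odometer (snd p))"

definition inv_measures :: "((int \<Rightarrow> bool) \<times> (nat \<Rightarrow> bool)) measure set" where
  "inv_measures = {\<nu>. prob_space \<nu> \<and> sets \<nu> = sets (ZS \<Otimes>\<^sub>M NS) \<and> distr \<nu> \<nu> SO = \<nu>}"

definition ergodic :: "'a measure \<Rightarrow> ('a \<Rightarrow> 'a) \<Rightarrow> bool" where
  "ergodic M T \<longleftrightarrow> T \<in> M \<rightarrow>\<^sub>M M \<and> distr M M T = M \<and>
     (\<forall>A \<in> sets M. T -` A \<inter> space M = A \<longrightarrow> emeasure M A = 0 \<or> emeasure M A = 1)"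

definition A0 :: "nat \<Rightarrow> (nat \<Rightarrow> bool) set" where
  "A0 k = {a. \<forall>i<k. \<not> a i}"

definition theta :: "nat \<Rightarrow> ((int \<Rightarrow> bool) \<times> (nat \<Rightarrow> bool)) measure \<Rightarrow> (int \<Rightarrow> bool) measure" where
  "theta k \<nu> = scale_measure (1 / emeasure \<nu> (UNIV \<times> A0 k))
     (distr (density \<nu> (indicator (UNIV \<times> A0 k))) ZS fst)"

end

(* Put K = 2^k. The odometer acts on the first k digits as addition of 1 modulo K, so the
   set I^Z x A_{0,k} returns to itself after exactly K steps of S x O, and the whole space is
   the Rokhlin tower of height K over it. An S^K-invariant set B therefore spreads out to an
   (S x O)-invariant tower of measure theta_k[nu](B), which gives (1) => (2); and B x A_{0,k}
   splits into B x A_{0,k+1} and its image after K steps, so theta_{k+1}[nu](B) = theta_k[nu](B),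
   which gives (3) => (2). For (2) => (1), condition nu on an invariant set A of positive
   measure. The result mu is invariant and absolutely continuous w.r.t. nu, hence so is each
   theta_k[mu] w.r.t. theta_k[nu]; an ergodic measure is extreme, so theta_k[mu] = theta_k[nu].
   The thetas determine the measures of the generating rectangles B x {first k digits fixed},
   so mu = nu and nu(A) = 1. *)

theory Submission
  imports Defs
begin

section \<open>Almost invariant sets and extremality of ergodic measures\<close>

lemma measurable_funpow: "f \<in> M \<rightarrow>\<^sub>M M \<Longrightarrow> f ^^ n \<in> M \<rightarrow>\<^sub>M M"
  by (induction n) auto

lemma null_sets_vimage_measure_preserving:
  assumes "T \<in> M \<rightarrow>\<^sub>M M" "distr M M T = M" "H \<in> null_sets M"
  shows "T -` H \<inter> space M \<in> null_sets M"
  using assms null_sets_distr_iff[of T M M H] by simp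

lemma null_sets_sym_diff_vimage_funpow:
  assumes T: "T \<in> M \<rightarrow>\<^sub>M M" "distr M M T = M" and E: "E \<in> sets M"
    and null: "(T -` E \<inter> space M) - E \<in> null_sets M" "E - (T -` E \<inter> space M) \<in> null_sets M"
  shows "((T ^^ n) -` E \<inter> space M - E) \<union> (E - (T ^^ n) -` E \<inter> space M) \<in> null_sets M"
proof (induction n)
  case 0
  have "(T ^^ 0) -` E \<inter> space M = E"
    using sets.sets_into_space[OF E] by auto
  then show ?case
    by simp
next
  case (Suc n)
  let ?En = "\<lambda>n. (T ^^ n) -` E \<inter> space M"
  have "?En (Suc n) = T -` ?En n \<inter> space M"
    using measurable_space[OF T(1)] by (auto simp: funpow_Suc_right simp del: funpow.simps)
  moreover have "(T -` ((?En n - E) \<union> (E - ?En n)) \<inter> space M) \<union> ((T -` E \<inter> space M) - E)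
      \<union> (E - (T -` E \<inter> space M)) \<in> null_sets M" (is "?N \<in> _")
    using null_sets_vimage_measure_preserving[OF T Suc.IH] null by auto
  ultimately have "(?En (Suc n) - E) \<union> (E - ?En (Suc n)) \<subseteq> ?N" "?N \<in> null_sets M"
    using sets.sets_into_space[OF E] by auto
  moreover have "?En (Suc n) \<in> sets M"
    using measurable_sets[OF measurable_funpow[OF T(1)] E] .
  ultimately show ?case
    using E by (metis null_sets_subset sets.Diff sets.Un)
qed

lemma measure_preserving_AE_invariant_set:
  assumes T: "T \<in> M \<rightarrow>\<^sub>M M" "distr M M T = M" and E: "E \<in> sets M"
    and null: "(T -` E \<inter> space M) - E \<in> null_sets M" "E - (T -` E \<inter> space M) \<in> null_sets M"
  obtains F where "F \<in> sets M" "T -` F \<inter> space M = F" "emeasure M F = emeasure M E"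
proof
  define En where "En n = (T ^^ n) -` E \<inter> space M" for n
  have sets_En [measurable]: "En n \<in> sets M" for n
    unfolding En_def using measurable_sets[OF measurable_funpow[OF T(1)] E] .
  have En_Suc: "En (Suc n) = T -` En n \<inter> space M" for n
    using measurable_space[OF T(1)] by (auto simp: En_def funpow_Suc_right simp del: funpow.simps)
  have null_En: "(En n - E) \<union> (E - En n) \<in> null_sets M" for n
    unfolding En_def by (rule null_sets_sym_diff_vimage_funpow[OF T E null])
  define F where "F = space M \<inter> (\<Union>N. \<Inter>n. En (n + N))"
  show "F \<in> sets M"
    unfolding F_def by auto
  show "T -` F \<inter> space M = F"
  proof (intro set_eqI iffI)
    fix x assume x: "x \<in> T -` F \<inter> space M"
    then obtain N where "\<forall>n. T x \<in> En (n + N)"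
      by (auto simp: F_def)
    then have "\<forall>n. x \<in> En (n + Suc N)"
      using x by (auto simp: En_Suc)
    then show "x \<in> F"
      using x unfolding F_def by blast
  next
    fix x assume "x \<in> F"
    then obtain N where "\<forall>n. x \<in> En (n + N)" and x: "x \<in> space M"
      unfolding F_def by blast
    then have "\<forall>n. x \<in> En (Suc (n + N))"
      by (metis add_Suc)
    then have "\<forall>n. T x \<in> En (n + N)"
      by (auto simp: En_Suc)
    then show "x \<in> T -` F \<inter> space M"
      using x measurable_space[OF T(1) x] by (auto simp: F_def)
  qed
  have "(\<Union>n. (En n - E) \<union> (E - En n)) \<in> null_sets M" (is "?N \<in> _")
    using null_En by auto
  moreover have "F - E \<subseteq> ?N" "E - F \<subseteq> ?N"
    using sets.sets_into_space[OF E] by (auto simp: F_def)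
  ultimately have "F - E \<in> null_sets M" "E - F \<in> null_sets M"
    using \<open>F \<in> sets M\<close> E by (metis null_sets_subset sets.Diff)+
  then have "emeasure M (F \<union> (E - F)) = emeasure M F" "emeasure M (E \<union> (F - E)) = emeasure M E"
    using \<open>F \<in> sets M\<close> E by (blast intro: emeasure_Un_null_set)+
  then show "emeasure M F = emeasure M E"
    by (simp add: Un_commute)
qed

lemma ergodic_AE_invariant_set:
  assumes "ergodic M T" "E \<in> sets M"
    and "(T -` E \<inter> space M) - E \<in> null_sets M" "E - (T -` E \<inter> space M) \<in> null_sets M"
  shows "emeasure M E = 0 \<or> emeasure M E = 1"
proof -
  have T: "T \<in> M \<rightarrow>\<^sub>M M" "distr M M T = M"
    using assms(1) by (simp_all add: ergodic_def)
  obtain F where "F \<in> sets M" "T -` F \<inter> space M = F" "emeasure M F = emeasure M E"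
    by (rule measure_preserving_AE_invariant_set[OF T assms(2-4)])
  then show ?thesis
    using assms(1) unfolding ergodic_def by metis
qed

lemma (in finite_measure) emeasure_Diff_vimage_eq:
  assumes T: "T \<in> M \<rightarrow>\<^sub>M M" "distr M M T = M" and E: "E \<in> sets M"
  shows "emeasure M (E - (T -` E \<inter> space M)) = emeasure M ((T -` E \<inter> space M) - E)"
proof -
  let ?E' = "T -` E \<inter> space M"
  have E': "?E' \<in> sets M"
    using measurable_sets[OF T(1) E] .
  have "emeasure M ?E' = emeasure M E"
    using emeasure_distr[OF T(1) E] T(2) by simp
  have "E - ?E' = E - (E \<inter> ?E')" "?E' - E = ?E' - (?E' \<inter> E)"
    by blast+
  then have "emeasure M (E - ?E') = emeasure M (E - (E \<inter> ?E'))"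
    by (simp only:)
  also have "\<dots> = emeasure M E - emeasure M (E \<inter> ?E')"
    using E E' by (intro emeasure_Diff) (auto simp: emeasure_finite)
  also have "\<dots> = emeasure M ?E' - emeasure M (?E' \<inter> E)"
    using \<open>emeasure M ?E' = emeasure M E\<close> by (simp add: Int_commute)
  also have "\<dots> = emeasure M (?E' - (?E' \<inter> E))"
    using E E' by (intro emeasure_Diff[symmetric]) (auto simp: emeasure_finite)
  finally show ?thesis
    by (simp only: \<open>?E' - E = ?E' - (?E' \<inter> E)\<close>)
qed

lemma null_set_if_nn_integral_less_one:
  assumes f[measurable]: "f \<in> borel_measurable M" and P[measurable]: "P \<in> sets M"
    and fin: "emeasure M P \<noteq> \<infinity>" and less: "\<And>x. x \<in> P \<Longrightarrow> f x < 1"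
    and eq: "(\<integral>\<^sup>+x. f x * indicator P x \<partial>M) = emeasure M P"
  shows "emeasure M P = 0"
proof -
  have "(\<integral>\<^sup>+x. indicator P x - f x * indicator P x \<partial>M)
      = (\<integral>\<^sup>+x. indicator P x \<partial>M) - (\<integral>\<^sup>+x. f x * indicator P x \<partial>M)"
  proof (rule nn_integral_diff)
    show "(\<integral>\<^sup>+x. f x * indicator P x \<partial>M) \<noteq> \<infinity>"
      using eq fin by simp
    show "AE x in M. f x * indicator P x \<le> indicator P x"
      using less by (simp add: indicator_def less_imp_le)
  qed measurable
  also have "\<dots> = 0"
    using eq fin by (simp add: diff_eq_0_iff_ennreal top.not_eq_extremum)
  finally have "AE x in M. indicator P x - f x * indicator P x = (0::ennreal)"
    by (subst nn_integral_0_iff_AE[symmetric]) measurable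
  then have "AE x in M. x \<notin> P"
    by (rule AE_mp) (auto simp: indicator_def less diff_eq_0_iff_ennreal not_le)
  then show ?thesis
    using AE_iff_null_sets[OF P] by auto
qed

lemma (in prob_space) AE_eq_1_if_ge_1_nn_integral_1:
  assumes f [measurable]: "f \<in> borel_measurable M"
    and ge: "AE x in M. 1 \<le> f x" and int: "(\<integral>\<^sup>+x. f x \<partial>M) = 1"
  shows "AE x in M. f x = 1"
proof -
  have int_1: "(\<integral>\<^sup>+x. 1 \<partial>M) = 1"
    using emeasure_space_1 by simp
  have "(\<integral>\<^sup>+x. f x - 1 \<partial>M) = (\<integral>\<^sup>+x. f x \<partial>M) - (\<integral>\<^sup>+x. 1 \<partial>M)"
    using ge int_1 by (intro nn_integral_diff) auto
  also have "\<dots> = 0"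
    using int int_1 by simp
  finally have "AE x in M. f x - 1 = (0::ennreal)"
    by (subst nn_integral_0_iff_AE[symmetric]) measurable
  then show ?thesis
    using ge by eventually_elim (auto simp: diff_eq_0_iff_ennreal)
qed

lemma ergodic_absolutely_continuous_eq:
  assumes erg: "ergodic M T" and "prob_space M" "prob_space N"
    and sets_N: "sets N = sets M" and inv_N: "distr N N T = N" and ac: "absolutely_continuous M N"
  shows "N = M"
proof -
  interpret M: prob_space M by fact
  interpret N: prob_space N by fact
  have T: "T \<in> M \<rightarrow>\<^sub>M M" "distr M M T = M"
    using erg by (simp_all add: ergodic_def)
  have T_N: "T \<in> N \<rightarrow>\<^sub>M N"
    using measurable_cong_sets[OF sets_N sets_N] T(1) by blast
  have space_N: "space N = space M"
    using sets_eq_imp_space_eq[OF sets_N] .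
  define f where "f = RN_deriv M N"
  have f [measurable]: "f \<in> borel_measurable M"
    by (simp add: f_def)
  have density_f: "density M f = N"
    unfolding f_def by (rule M.density_RN_deriv[OF ac sets_N])
  have N_eq: "emeasure N A = (\<integral>\<^sup>+x. f x * indicator A x \<partial>M)" if "A \<in> sets M" for A
    using emeasure_density[OF f that] density_f by simp
  \<comment> \<open>E - T\<inverse>E and T\<inverse>E - E have equal mass under M and under N, which forces both to be null;
     so M E is 0 or 1 by ergodicity, and N \<ll> M rules out 1. Then f \<ge> 1 a.e. with \<integral>f = 1.\<close>
  define E where "E = {x \<in> space M. f x < 1}"
  define E' where "E' = T -` E \<inter> space M"
  have E [measurable]: "E \<in> sets M"
    unfolding E_def by measurable
  have E' [measurable]: "E' \<in> sets M"
    unfolding E'_def using measurable_sets[OF T(1) E] .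
  have "emeasure N (E - E') = emeasure N (E' - E)"
    using N.emeasure_Diff_vimage_eq[OF T_N inv_N, of E] by (simp add: sets_N space_N E'_def)
  moreover have "emeasure M (E - E') = emeasure M (E' - E)"
    using M.emeasure_Diff_vimage_eq[OF T E] by (simp add: E'_def)
  moreover have "emeasure N (E - E') \<le> emeasure M (E - E')"
  proof -
    have "emeasure N (E - E') = (\<integral>\<^sup>+x. f x * indicator (E - E') x \<partial>M)"
      by (simp add: N_eq)
    also have "\<dots> \<le> (\<integral>\<^sup>+x. indicator (E - E') x \<partial>M)"
      by (intro nn_integral_mono) (auto simp: indicator_def E_def)
    finally show ?thesis
      by simp
  qed
  moreover have "emeasure M (E' - E) \<le> emeasure N (E' - E)"
  proof -
    have "(\<integral>\<^sup>+x. indicator (E' - E) x \<partial>M) \<le> (\<integral>\<^sup>+x. f x * indicator (E' - E) x \<partial>M)"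
      by (intro nn_integral_mono) (auto simp: indicator_def E_def E'_def not_less)
    also have "\<dots> = emeasure N (E' - E)"
      by (simp add: N_eq)
    finally show ?thesis
      by simp
  qed
  ultimately have "emeasure N (E - E') = emeasure M (E - E')"
    by (metis antisym order_trans)
  then have "emeasure M (E - E') = 0"
    by (intro null_set_if_nn_integral_less_one[OF f]) (auto simp: N_eq E_def M.emeasure_finite)
  then have "E - E' \<in> null_sets M" "E' - E \<in> null_sets M"
    using \<open>emeasure M (E - E') = emeasure M (E' - E)\<close> by auto
  then have E_01: "emeasure M E = 0 \<or> emeasure M E = 1"
    using ergodic_AE_invariant_set[OF erg E] by (simp add: E'_def)
  have "emeasure M E \<noteq> 1"
  proof
    assume "emeasure M E = 1"
    then have "space M - E \<in> null_sets M"
      using E by (simp add: null_sets_def emeasure_compl M.emeasure_space_1)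
    then have "space M - E \<in> null_sets N"
      using ac unfolding absolutely_continuous_def by blast
    then have "emeasure N E = 1"
      using emeasure_Un_null_set[of E N "space M - E"] sets.sets_into_space[OF E]
      using N.emeasure_space_1 by (simp add: sets_N space_N Un_absorb1)
    then have "emeasure M E = 0"
      using \<open>emeasure M E = 1\<close>
      by (intro null_set_if_nn_integral_less_one[OF f E]) (auto simp: N_eq E_def)
    then show False
      using \<open>emeasure M E = 1\<close> by simp
  qed
  then have "AE x in M. 1 \<le> f x"
    using E_01 AE_iff_measurable[OF E, of "\<lambda>x. 1 \<le> f x"] by (auto simp: E_def not_le)
  moreover have "(\<integral>\<^sup>+x. f x \<partial>M) = (\<integral>\<^sup>+x. f x * indicator (space M) x \<partial>M)"
    by (intro nn_integral_cong) simp
  then have "(\<integral>\<^sup>+x. f x \<partial>M) = 1"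
    using N_eq[of "space M"] N.emeasure_space_1 by (simp add: space_N)
  ultimately have "AE x in M. f x = 1"
    by (rule M.AE_eq_1_if_ge_1_nn_integral_1[OF f])
  then have "density M f = density M (\<lambda>_. 1)"
    by (intro density_cong) auto
  then show ?thesis
    using density_f density_1 by metis
qed

section \<open>The shift, the odometer and binary cylinders\<close>

lemma space_ZS [simp]: "space ZS = UNIV"
  by (simp add: ZS_def space_PiM)

lemma space_NS [simp]: "space NS = UNIV"
  by (simp add: NS_def space_PiM)

lemma space_ZS_NS [simp]: "space (ZS \<Otimes>\<^sub>M NS) = UNIV"
  by (simp add: space_pair_measure)

lemma sets_UNIV_ZS [measurable]: "UNIV \<in> sets ZS"
  using sets.top[of ZS] by simp

lemma sets_UNIV_NS [measurable]: "UNIV \<in> sets NS"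
  using sets.top[of NS] by simp

lemma measurable_NS_nth [measurable]: "(\<lambda>a. a i) \<in> NS \<rightarrow>\<^sub>M count_space UNIV"
  unfolding NS_def by (rule measurable_component_singleton) simp

\<comment> \<open>not a measurable rule: for arbitrary f it makes the measurability prover loop\<close>
lemma measurable_ZS_reindex: "(\<lambda>x i. x (f i)) \<in> ZS \<rightarrow>\<^sub>M ZS"
  unfolding ZS_def by (rule measurable_PiM_single') (auto intro: measurable_component_singleton)

lemma measurable_shift [measurable]: "shift \<in> ZS \<rightarrow>\<^sub>M ZS"
  unfolding shift_def[abs_def] by (rule measurable_ZS_reindex)

lemma funpow_shift: "(shift ^^ n) x = (\<lambda>i. x (i + int n))"
  by (induction n arbitrary: x) (auto simp: shift_def add.assoc)

lemma measurable_funpow_shift [measurable]: "shift ^^ n \<in> ZS \<rightarrow>\<^sub>M ZS"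
  by (simp add: funpow_shift[abs_def] measurable_ZS_reindex)

lemma odometer_nth: "odometer a i \<longleftrightarrow> a i \<noteq> (\<forall>j<i. a j)"
proof (cases "\<forall>i. a i")
  case False
  define n where "n = (LEAST n. \<not> a n)"
  have "\<not> a n" and "\<And>j. j < n \<Longrightarrow> a j"
    unfolding n_def using False by (metis LeastI) (use not_less_Least in blast)
  moreover have "odometer a = (\<lambda>i. if i < n then False else if i = n then True else a i)"
    unfolding odometer_def n_def Let_def using False by (simp only: if_not_P if_False)
  ultimately show ?thesis
    by (cases "i < n"; cases "i = n") (auto intro!: exI[of _ n])
qed (simp add: odometer_def)

lemma measurable_odometer [measurable]: "odometer \<in> NS \<rightarrow>\<^sub>M NS"
proof -
  have "(\<lambda>a i. a i \<noteq> (\<forall>j<i. a j)) \<in> NS \<rightarrow>\<^sub>M PiM UNIV (\<lambda>_. count_space UNIV)"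
    by (rule measurable_PiM_single') auto
  then show ?thesis
    by (simp add: NS_def odometer_nth[abs_def])
qed

lemma measurable_SO [measurable]: "SO \<in> ZS \<Otimes>\<^sub>M NS \<rightarrow>\<^sub>M ZS \<Otimes>\<^sub>M NS"
  unfolding SO_def by measurable

lemma funpow_SO: "(SO ^^ n) p = ((shift ^^ n) (fst p), (odometer ^^ n) (snd p))"
  by (induction n arbitrary: p) (auto simp: SO_def)

lemma vimage_funpow_SO_Times: "(SO ^^ n) -` (B \<times> C) = (shift ^^ n) -` B \<times> (odometer ^^ n) -` C"
  by (auto simp: funpow_SO)

definition binval :: "nat \<Rightarrow> (nat \<Rightarrow> bool) \<Rightarrow> nat" where
  "binval k a = (\<Sum>i<k. if a i then 2 ^ i else 0)"

definition cyl :: "nat \<Rightarrow> nat \<Rightarrow> (nat \<Rightarrow> bool) set" where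
  "cyl k j = {a. binval k a = j}"

lemma binval_0 [simp]: "binval 0 a = 0"
  by (simp add: binval_def)

lemma binval_Suc: "binval (Suc k) a = binval k a + (if a k then 2 ^ k else 0)"
  by (simp add: binval_def)

lemma binval_less: "binval k a < 2 ^ k"
  by (induction k) (auto simp: binval_Suc)

lemma binval_add_mod: "binval (k + d) a mod 2 ^ k = binval k a"
proof (induction d)
  case 0
  show ?case
    using binval_less[of k a] by (metis add_0_right mod_less)
qed (simp add: binval_Suc power_add)

lemma binval_eq_max_iff: "binval k a + 1 = 2 ^ k \<longleftrightarrow> (\<forall>j<k. a j)"
proof (induction k)
  case (Suc k)
  then show ?case
    using binval_less[of k a] by (auto simp: binval_Suc less_Suc_eq)
qed simp

lemma measurable_binval [measurable]: "binval k \<in> NS \<rightarrow>\<^sub>M count_space UNIV"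
  unfolding binval_def by measurable

lemma sets_cyl [measurable]: "cyl k j \<in> sets NS"
proof -
  have "cyl k j = binval k -` {j} \<inter> space NS"
    by (auto simp: cyl_def)
  then show ?thesis
    using measurable_sets[OF measurable_binval, of "{j}" k] by simp
qed

lemma A0_eq_cyl: "A0 k = cyl k 0"
  by (auto simp: A0_def cyl_def binval_def)

lemma sets_A0 [measurable]: "A0 k \<in> sets NS"
  by (simp add: A0_eq_cyl)

lemma binval_odometer: "binval k (odometer a) = (binval k a + 1) mod 2 ^ k"
proof (induction k)
  case (Suc k)
  have "binval k a < 2 ^ k" by (rule binval_less)
  moreover have "odometer a k \<longleftrightarrow> a k \<noteq> (binval k a + 1 = 2 ^ k)"
    unfolding odometer_nth binval_eq_max_iff ..
  ultimately show ?case
    using Suc by (cases "binval k a + 1 = 2 ^ k") (auto simp: binval_Suc mod_if)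
qed simp

lemma binval_funpow_odometer: "binval k ((odometer ^^ n) a) = (binval k a + n) mod 2 ^ k"
  by (induction n) (auto simp: binval_odometer binval_less mod_Suc_eq)

lemma vimage_funpow_odometer_A0:
  assumes "0 < m" "m \<le> 2 ^ k"
  shows "(odometer ^^ m) -` A0 k = cyl k (2 ^ k - m)"
proof -
  have "(b + m) mod 2 ^ k = 0 \<longleftrightarrow> b = 2 ^ k - m" if "b < 2 ^ k" for b :: nat
    using that assms by (auto simp: mod_if)
  then show ?thesis
    by (auto simp: A0_eq_cyl cyl_def binval_funpow_odometer binval_less)
qed

lemma cyl_Int_cyl: "k \<le> k' \<Longrightarrow> cyl k j \<inter> cyl k' j' = (if j' mod 2 ^ k = j then cyl k' j' else {})"
  using binval_add_mod[of k "k' - k"] by (auto simp: cyl_def)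

lemma cyl_0_0 [simp]: "cyl 0 0 = UNIV"
  by (simp add: cyl_def)

lemma sets_NS_cylinders: "sets NS = sigma_sets UNIV (range (case_prod cyl))"
proof -
  let ?C = "range (case_prod cyl)"
  have "sets NS = sigma_sets UNIV {{a :: nat \<Rightarrow> bool. a i \<in> X} | i X. X \<in> (UNIV :: bool set set)}"
    by (simp add: NS_def sets_PiM_single PiE_UNIV_domain)
  also have "\<dots> = sigma_sets UNIV ?C"
  proof (rule sigma_sets_eqI)
    fix Y assume "Y \<in> {{a :: nat \<Rightarrow> bool. a i \<in> X} | i X. X \<in> (UNIV :: bool set set)}"
    then obtain i X where Y: "Y = {a. a i \<in> X}"
      by blast
    have "a i \<longleftrightarrow> (\<exists>j. binval (Suc i) a = 2 ^ i + j)" for a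
      using binval_less[of i a] by (auto simp: binval_Suc)
    then have "{a. a i} = (\<Union>j. cyl (Suc i) (2 ^ i + j))"
      unfolding cyl_def by blast
    then have T: "{a. a i} \<in> sigma_sets UNIV ?C"
      by (metis (no_types, lifting) rangeI sigma_sets.Basic sigma_sets.Union split_conv)
    have C: "UNIV - {a. a i} \<in> sigma_sets UNIV ?C"
      by (rule sigma_sets.Compl[OF T])
    have "Y \<in> {{}, {a. a i}, UNIV - {a. a i}, UNIV}"
      unfolding Y by (cases "True \<in> X"; cases "False \<in> X") (auto, (metis (full_types))+)
    then show "Y \<in> sigma_sets UNIV ?C"
      using T C sigma_sets.Empty sigma_sets_top by auto
  next
    fix Y assume "Y \<in> ?C"
    then have "Y \<in> sets NS"
      by auto
    then show "Y \<in> sigma_sets UNIV {{a :: nat \<Rightarrow> bool. a i \<in> X} | i X. X \<in> (UNIV :: bool set set)}"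
      by (simp add: NS_def sets_PiM_single PiE_UNIV_domain)
  qed
  finally show ?thesis .
qed

definition rectangles :: "((int \<Rightarrow> bool) \<times> (nat \<Rightarrow> bool)) set set" where
  "rectangles = {B \<times> C | B C. B \<in> sets ZS \<and> C \<in> range (case_prod cyl)}"

lemma sets_ZS_NS_rectangles: "sets (ZS \<Otimes>\<^sub>M NS) = sigma_sets UNIV rectangles"
proof -
  have "sets (ZS \<Otimes>\<^sub>M NS) = sets (sigma (space ZS \<times> space NS) rectangles)"
    unfolding rectangles_def
  proof (rule sets_pair_eq[where Ca="{UNIV}" and Cb="{cyl 0 0}"])
    show "sets ZS = sigma_sets (space ZS) (sets ZS)"
      using sets.sigma_sets_eq[of ZS] by simp
    show "sets NS = sigma_sets (space NS) (range (case_prod cyl))"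
      by (simp add: sets_NS_cylinders)
    show "{cyl 0 0} \<subseteq> range (case_prod cyl)"
      by (auto intro: image_eqI[where x="(0, 0)"])
  qed (use sets.top[of ZS] in \<open>simp_all add: sets.space_closed\<close>)
  then show ?thesis
    by (simp add: sets_measure_of_conv rectangles_def)
qed

lemma Int_stable_rectangles: "Int_stable rectangles"
proof (rule Int_stableI)
  fix X Y assume "X \<in> rectangles" "Y \<in> rectangles"
  then obtain B k j B' k' j' where X: "X = B \<times> cyl k j" and Y: "Y = B' \<times> cyl k' j'"
    and B: "B \<inter> B' \<in> sets ZS"
    by (auto simp: rectangles_def)
  have "{} \<in> rectangles"
    unfolding rectangles_def by (auto intro!: exI[of _ "{}"] exI[of _ "cyl 0 0"])
  moreover have "(B \<inter> B') \<times> cyl k'' j'' \<in> rectangles" for k'' j''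
    using B by (auto simp: rectangles_def)
  moreover have "X \<inter> Y = (B \<inter> B') \<times> (cyl k j \<inter> cyl k' j')"
    by (auto simp: X Y)
  ultimately show "X \<inter> Y \<in> rectangles"
    using cyl_Int_cyl[of k k' j j'] cyl_Int_cyl[of k' k j' j]
    by (cases "k \<le> k'") (auto simp: Int_commute)
qed

section \<open>Invariant measures and their projections theta\<close>

lemma inv_measuresD:
  assumes "\<nu> \<in> inv_measures"
  shows "prob_space \<nu>" "sets \<nu> = sets (ZS \<Otimes>\<^sub>M NS)" "space \<nu> = UNIV" "distr \<nu> \<nu> SO = \<nu>"
  using assms sets_eq_imp_space_eq[of \<nu> "ZS \<Otimes>\<^sub>M NS"] by (auto simp: inv_measures_def)

lemma measurable_SO_inv_measures:
  "\<nu> \<in> inv_measures \<Longrightarrow> SO \<in> \<nu> \<rightarrow>\<^sub>M \<nu>"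
  using measurable_cong_sets[OF inv_measuresD(2) inv_measuresD(2)] measurable_SO by blast

lemma emeasure_vimage_SO:
  assumes "\<nu> \<in> inv_measures" "G \<in> sets (ZS \<Otimes>\<^sub>M NS)"
  shows "emeasure \<nu> (SO -` G) = emeasure \<nu> G"
  using emeasure_distr[OF measurable_SO_inv_measures[OF assms(1)], of G] assms
  by (simp add: inv_measuresD)

lemma emeasure_vimage_funpow_SO:
  assumes "\<nu> \<in> inv_measures" "G \<in> sets (ZS \<Otimes>\<^sub>M NS)"
  shows "emeasure \<nu> ((SO ^^ n) -` G) = emeasure \<nu> G"
proof (induction n)
  case (Suc n)
  have "(SO ^^ n) -` G \<in> sets (ZS \<Otimes>\<^sub>M NS)"
    using measurable_sets[OF measurable_funpow[OF measurable_SO] assms(2)] by simp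
  have "emeasure \<nu> ((SO ^^ Suc n) -` G) = emeasure \<nu> (SO -` ((SO ^^ n) -` G))"
    by (simp only: funpow_Suc_right vimage_comp)
  also have "\<dots> = emeasure \<nu> G"
    using emeasure_vimage_SO[OF assms(1) \<open>(SO ^^ n) -` G \<in> sets (ZS \<Otimes>\<^sub>M NS)\<close>] Suc.IH by simp
  finally show ?case .
qed simp

lemma emeasure_Times_cyl:
  assumes "\<nu> \<in> inv_measures" "B \<in> sets ZS" "j < 2 ^ k"
  shows "emeasure \<nu> (B \<times> cyl k j) = emeasure \<nu> ((\<lambda>x i. x (i - int (2 ^ k - j))) -` B \<times> A0 k)"
proof -
  let ?m = "2 ^ k - j"
  have "(shift ^^ ?m) -` (\<lambda>x i. x (i - int ?m)) -` B = B"
    by (auto simp: funpow_shift)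
  then have "(SO ^^ ?m) -` ((\<lambda>x i. x (i - int ?m)) -` B \<times> A0 k) = B \<times> cyl k j"
    using assms(3) vimage_funpow_odometer_A0[of ?m k] by (simp add: vimage_funpow_SO_Times)
  then show ?thesis
    using emeasure_vimage_funpow_SO[OF assms(1), of "(\<lambda>x i. x (i - int ?m)) -` B \<times> A0 k" ?m]
      measurable_sets[OF measurable_ZS_reindex assms(2)]
    by simp
qed

lemma emeasure_UNIV_A0:
  assumes "\<nu> \<in> inv_measures"
  shows "2 ^ k * emeasure \<nu> (UNIV \<times> A0 k) = 1"
proof -
  have "UNIV = (\<Union>j<2 ^ k. UNIV \<times> cyl k j)"
    using binval_less by (auto simp: cyl_def)
  moreover have "emeasure \<nu> (\<Union>j<2 ^ k. UNIV \<times> cyl k j) = (\<Sum>j<2 ^ k. emeasure \<nu> (UNIV \<times> cyl k j))"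
    using assms by (intro sum_emeasure[symmetric]) (auto simp: inv_measuresD disjoint_family_on_def, auto simp: cyl_def)
  ultimately have "emeasure \<nu> UNIV = (\<Sum>j<2 ^ k. emeasure \<nu> (UNIV \<times> cyl k j))"
    by metis
  also have "\<dots> = (\<Sum>j < (2::nat) ^ k. emeasure \<nu> (UNIV \<times> A0 k))"
    using emeasure_Times_cyl[OF assms, of UNIV] by simp
  finally show ?thesis
    using prob_space.emeasure_space_1[OF inv_measuresD(1)] assms by (simp add: inv_measuresD)
qed

lemma sets_theta [simp]: "sets (theta k \<nu>) = sets ZS"
  by (simp add: theta_def)

lemma space_theta [simp]: "space (theta k \<nu>) = UNIV"
  using sets_eq_imp_space_eq[OF sets_theta] by simp

lemma emeasure_theta:
  assumes "\<nu> \<in> inv_measures" "B \<in> sets ZS"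
  shows "emeasure (theta k \<nu>) B = 2 ^ k * emeasure \<nu> (B \<times> A0 k)"
proof -
  let ?c = "emeasure \<nu> (UNIV \<times> A0 k)"
  have sets: "sets \<nu> = sets (ZS \<Otimes>\<^sub>M NS)" "space \<nu> = UNIV"
    using inv_measuresD[OF assms(1)] by simp_all
  have "fst \<in> density \<nu> (indicator (UNIV \<times> A0 k)) \<rightarrow>\<^sub>M ZS"
    using measurable_cong_sets[of "density \<nu> _" "ZS \<Otimes>\<^sub>M NS" ZS ZS] sets by simp
  then have "emeasure (distr (density \<nu> (indicator (UNIV \<times> A0 k))) ZS fst) B
      = emeasure \<nu> ((UNIV \<times> A0 k) \<inter> (B \<times> UNIV))"
    using assms(2) sets emeasure_restricted[of "UNIV \<times> A0 k" \<nu> "B \<times> UNIV"]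
    by (simp add: emeasure_distr vimage_fst pair_measureI)
  moreover have "1 / ?c = 2 ^ k"
  proof -
    have c: "2 ^ k * ?c = 1"
      by (rule emeasure_UNIV_A0[OF assms(1)])
    then have "?c \<noteq> 0" "?c \<noteq> \<infinity>"
      by (auto simp: ennreal_mult_eq_top_iff)
    then show ?thesis
      using c mult_divide_eq_ennreal[of ?c "2 ^ k"] by simp
  qed
  ultimately show ?thesis
    by (simp add: theta_def Times_Int_Times)
qed

lemma prob_space_theta:
  assumes "\<nu> \<in> inv_measures"
  shows "prob_space (theta k \<nu>)"
  by standard (simp add: emeasure_theta[OF assms] emeasure_UNIV_A0[OF assms])

lemma vimage_funpow_shift_Times_A0:
  "(shift ^^ 2 ^ k) -` B \<times> A0 k = (SO ^^ 2 ^ k) -` (B \<times> A0 k)"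
  using vimage_funpow_odometer_A0[of "2 ^ k" k] by (simp add: vimage_funpow_SO_Times A0_eq_cyl)

lemma measurable_funpow_shift_theta: "shift ^^ n \<in> theta k \<nu> \<rightarrow>\<^sub>M theta k' \<nu>'"
  unfolding measurable_cong_sets[OF sets_theta sets_theta] by (rule measurable_funpow_shift)

lemma theta_shift_invariant:
  assumes "\<nu> \<in> inv_measures"
  shows "distr (theta k \<nu>) (theta k \<nu>) (shift ^^ 2 ^ k) = theta k \<nu>"
proof (rule measure_eqI)
  fix B assume "B \<in> sets (distr (theta k \<nu>) (theta k \<nu>) (shift ^^ 2 ^ k))"
  then have B: "B \<in> sets ZS"
    by simp
  have "emeasure (distr (theta k \<nu>) (theta k \<nu>) (shift ^^ 2 ^ k)) B
      = emeasure (theta k \<nu>) ((shift ^^ 2 ^ k) -` B)"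
    using emeasure_distr[OF measurable_funpow_shift_theta, of B] B by simp
  also have "\<dots> = 2 ^ k * emeasure \<nu> ((SO ^^ 2 ^ k) -` (B \<times> A0 k))"
    using emeasure_theta[OF assms measurable_sets[OF measurable_funpow_shift B]]
    by (simp add: vimage_funpow_shift_Times_A0)
  also have "\<dots> = emeasure (theta k \<nu>) B"
    using emeasure_vimage_funpow_SO[OF assms, of "B \<times> A0 k"] emeasure_theta[OF assms B] B
    by (simp add: pair_measureI)
  finally show "emeasure (distr (theta k \<nu>) (theta k \<nu>) (shift ^^ 2 ^ k)) B = emeasure (theta k \<nu>) B" .
qed simp

lemma ergodic_theta_iff:
  assumes "\<nu> \<in> inv_measures"
  shows "ergodic (theta k \<nu>) (shift ^^ 2 ^ k) \<longleftrightarrow>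
    (\<forall>B \<in> sets ZS. (shift ^^ 2 ^ k) -` B = B \<longrightarrow> emeasure (theta k \<nu>) B = 0 \<or> emeasure (theta k \<nu>) B = 1)"
  using theta_shift_invariant[OF assms] measurable_funpow_shift_theta[of "2 ^ k" k \<nu> k \<nu>]
  by (simp add: ergodic_def)

section \<open>The three conditions\<close>

\<comment> \<open>the Rokhlin tower of height 2^k over B x A0 k\<close>
definition tower :: "nat \<Rightarrow> (int \<Rightarrow> bool) set \<Rightarrow> ((int \<Rightarrow> bool) \<times> (nat \<Rightarrow> bool)) set" where
  "tower k B = {(x, a). (shift ^^ (2 ^ k - binval k a)) x \<in> B}"

lemma vimage_funpow_SO_Times_A0:
  assumes "0 < m" "m \<le> 2 ^ k"
  shows "(SO ^^ m) -` (B \<times> A0 k) = (shift ^^ m) -` B \<times> cyl k (2 ^ k - m)"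
  using vimage_funpow_odometer_A0[OF assms] by (simp add: vimage_funpow_SO_Times)

lemma tower_eq_UN: "tower k B = (\<Union>m\<in>{1..2 ^ k}. (SO ^^ m) -` (B \<times> A0 k))"
proof -
  have "(x, a) \<in> tower k B \<longleftrightarrow> (x, a) \<in> (\<Union>m\<in>{1..2 ^ k}. (SO ^^ m) -` (B \<times> A0 k))" for x a
  proof -
    have "binval k a < 2 ^ k"
      by (rule binval_less)
    then have "m \<in> {1..2 ^ k} \<and> binval k a = 2 ^ k - m \<longleftrightarrow> m = 2 ^ k - binval k a" for m
      by auto
    then show ?thesis
      unfolding tower_def by (simp add: vimage_funpow_SO_Times_A0 cyl_def) (metis atLeastAtMost_iff)
  qed
  then show ?thesis
    by (intro set_eqI) (metis surj_pair)
qed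

lemma sets_tower [measurable]: "B \<in> sets ZS \<Longrightarrow> tower k B \<in> sets (ZS \<Otimes>\<^sub>M NS)"
  unfolding tower_eq_UN using measurable_sets[OF measurable_funpow[OF measurable_SO]]
  by (auto intro!: sets.finite_UN pair_measureI)

lemma vimage_SO_tower:
  assumes "(shift ^^ 2 ^ k) -` B = B"
  shows "SO -` tower k B = tower k B"
proof (intro set_eqI)
  fix p :: "(int \<Rightarrow> bool) \<times> (nat \<Rightarrow> bool)"
  obtain x a where p: "p = (x, a)"
    by (cases p)
  have "(shift ^^ (2 ^ k - binval k (odometer a))) (shift x) \<in> B \<longleftrightarrow> (shift ^^ (2 ^ k - binval k a)) x \<in> B"
  proof (cases "binval k a + 1 < 2 ^ k")
    case True
    then show ?thesis
      by (simp add: binval_odometer funpow_shift shift_def algebra_simps of_nat_diff)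
  next
    case False
    then have top: "binval k a + 1 = 2 ^ k"
      using binval_less[of k a] by simp
    then have "binval k (odometer a) = 0" "2 ^ k - binval k a = 1"
      by (simp_all add: binval_odometer)
    \<comment> \<open>at the top of the tower the odometer returns to the base, and B absorbs the extra 2^k shifts\<close>
    then have "(shift ^^ (2 ^ k - binval k (odometer a))) (shift x) = (shift ^^ 2 ^ k) ((shift ^^ (2 ^ k - binval k a)) x)"
      by (simp add: funpow_shift shift_def algebra_simps)
    then show ?thesis
      using assms by (auto simp: set_eq_iff)
  qed
  then show "p \<in> SO -` tower k B \<longleftrightarrow> p \<in> tower k B"
    by (simp add: p tower_def SO_def)
qed

lemma emeasure_tower:
  assumes "\<nu> \<in> inv_measures" "B \<in> sets ZS"
  shows "emeasure \<nu> (tower k B) = emeasure (theta k \<nu>) B"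
proof -
  have sets: "(SO ^^ m) -` (B \<times> A0 k) \<in> sets \<nu>" for m
    using measurable_sets[OF measurable_funpow[OF measurable_SO] pair_measureI[OF assms(2) sets_A0]]
    by (simp add: inv_measuresD[OF assms(1)])
  have "disjoint_family_on (\<lambda>m. (SO ^^ m) -` (B \<times> A0 k)) {1..2 ^ k}"
    by (auto simp: disjoint_family_on_def vimage_funpow_SO_Times_A0 cyl_def)
  then have "emeasure \<nu> (tower k B) = (\<Sum>m\<in>{1..2 ^ k}. emeasure \<nu> ((SO ^^ m) -` (B \<times> A0 k)))"
    unfolding tower_eq_UN using sets by (intro sum_emeasure[symmetric]) (auto simp only: image_subset_iff finite_atLeastAtMost)
  also have "\<dots> = (\<Sum>m\<in>{1..(2::nat) ^ k}. emeasure \<nu> (B \<times> A0 k))"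
    by (simp only: emeasure_vimage_funpow_SO[OF assms(1) pair_measureI[OF assms(2) sets_A0]])
  also have "\<dots> = emeasure (theta k \<nu>) B"
    using emeasure_theta[OF assms] by simp
  finally show ?thesis .
qed

lemma ergodic_theta_if_ergodic:
  assumes "\<nu> \<in> inv_measures" "ergodic \<nu> SO"
  shows "ergodic (theta k \<nu>) (shift ^^ 2 ^ k)"
  unfolding ergodic_theta_iff[OF assms(1)]
proof (intro ballI impI)
  fix B assume B: "B \<in> sets ZS" and inv: "(shift ^^ 2 ^ k) -` B = B"
  have "tower k B \<in> sets \<nu>" "SO -` tower k B \<inter> space \<nu> = tower k B"
    using B vimage_SO_tower[OF inv] by (simp_all add: inv_measuresD[OF assms(1)])
  then have "emeasure \<nu> (tower k B) = 0 \<or> emeasure \<nu> (tower k B) = 1"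
    using assms(2) unfolding ergodic_def by blast
  then show "emeasure (theta k \<nu>) B = 0 \<or> emeasure (theta k \<nu>) B = 1"
    by (simp add: emeasure_tower[OF assms(1) B])
qed

lemma emeasure_theta_Suc:
  assumes "\<nu> \<in> inv_measures" "B \<in> sets ZS" "(shift ^^ 2 ^ k) -` B = B"
  shows "emeasure (theta (Suc k) \<nu>) B = emeasure (theta k \<nu>) B"
proof -
  have "A0 k = A0 (Suc k) \<union> cyl (Suc k) (2 ^ k)"
    using binval_less[of k] by (auto simp: A0_eq_cyl cyl_def binval_Suc) (metis less_irrefl)
  then have "B \<times> A0 k = B \<times> A0 (Suc k) \<union> B \<times> cyl (Suc k) (2 ^ k)"
    by blast
  have "B \<times> cyl (Suc k) (2 ^ k) = (SO ^^ 2 ^ k) -` (B \<times> A0 (Suc k))"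
    using vimage_funpow_SO_Times_A0[of "2 ^ k" "Suc k" B] assms(3) by simp
  then have "emeasure \<nu> (B \<times> cyl (Suc k) (2 ^ k)) = emeasure \<nu> (B \<times> A0 (Suc k))"
    using emeasure_vimage_funpow_SO[OF assms(1) pair_measureI[OF assms(2) sets_A0]] by simp
  moreover have "emeasure \<nu> (B \<times> A0 k) = emeasure \<nu> (B \<times> A0 (Suc k)) + emeasure \<nu> (B \<times> cyl (Suc k) (2 ^ k))"
    unfolding \<open>B \<times> A0 k = B \<times> A0 (Suc k) \<union> B \<times> cyl (Suc k) (2 ^ k)\<close> using assms(2)
    by (intro plus_emeasure[symmetric]) (auto simp: inv_measuresD[OF assms(1)] pair_measureI, auto simp: A0_eq_cyl cyl_def)
  ultimately show ?thesis
    using assms(1,2) by (simp add: emeasure_theta mult_2 distrib_left distrib_right)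
qed

lemma ergodic_theta_if_ergodic_theta_Suc:
  assumes "\<nu> \<in> inv_measures" "ergodic (theta (Suc k) \<nu>) (shift ^^ 2 ^ Suc k)"
  shows "ergodic (theta k \<nu>) (shift ^^ 2 ^ k)"
  unfolding ergodic_theta_iff[OF assms(1)]
proof (intro ballI impI)
  fix B assume B: "B \<in> sets ZS" and inv: "(shift ^^ 2 ^ k) -` B = B"
  then have "(shift ^^ 2 ^ Suc k) -` B = B"
    by (simp add: mult_2 funpow_add vimage_comp[symmetric])
  then have "emeasure (theta (Suc k) \<nu>) B = 0 \<or> emeasure (theta (Suc k) \<nu>) B = 1"
    using assms(2) B unfolding ergodic_theta_iff[OF assms(1)] by blast
  then show "emeasure (theta k \<nu>) B = 0 \<or> emeasure (theta k \<nu>) B = 1"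
    by (simp add: emeasure_theta_Suc[OF assms(1) B inv])
qed

lemma emeasure_Times_cyl_theta:
  assumes "\<nu> \<in> inv_measures" "B \<in> sets ZS" "j < 2 ^ k"
  shows "2 ^ k * emeasure \<nu> (B \<times> cyl k j) = emeasure (theta k \<nu>) ((\<lambda>x i. x (i - int (2 ^ k - j))) -` B)"
  using emeasure_Times_cyl[OF assms] emeasure_theta[OF assms(1) measurable_sets[OF measurable_ZS_reindex assms(2)]]
  by simp

lemma inv_measures_eqI:
  assumes \<nu>: "\<nu> \<in> inv_measures" and \<nu>': "\<nu>' \<in> inv_measures" and theta: "\<And>k. theta k \<nu> = theta k \<nu>'"
  shows "\<nu> = \<nu>'"
proof (rule measure_eqI_generator_eq[OF Int_stable_rectangles, of UNIV _ _ "\<lambda>_. UNIV"])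
  show "sets \<nu> = sigma_sets UNIV rectangles" "sets \<nu>' = sigma_sets UNIV rectangles"
    using \<nu> \<nu>' by (simp_all add: inv_measuresD sets_ZS_NS_rectangles)
  show "range (\<lambda>_. UNIV) \<subseteq> rectangles"
    unfolding rectangles_def by (auto intro!: exI[of _ UNIV] exI[of _ "cyl 0 0"])
  show "emeasure \<nu> UNIV \<noteq> \<infinity>" for i :: nat
    using prob_space.emeasure_space_1[OF inv_measuresD(1)[OF \<nu>]] \<nu> by (simp add: inv_measuresD)
  fix X assume "X \<in> rectangles"
  then obtain B k j where X: "X = B \<times> cyl k j" and B: "B \<in> sets ZS"
    by (auto simp: rectangles_def)
  show "emeasure \<nu> X = emeasure \<nu>' X"
  proof (cases "j < 2 ^ k")
    case True
    then have "2 ^ k * emeasure \<nu> X = 2 ^ k * emeasure \<nu>' X"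
      unfolding X using emeasure_Times_cyl_theta[OF \<nu> B] emeasure_Times_cyl_theta[OF \<nu>' B] theta by simp
    then show ?thesis
      by (simp add: ennreal_mult_cancel_left power_eq_top_ennreal)
  next
    case False
    then have "cyl k j = {}"
      using binval_less[of k] by (auto simp: cyl_def)
    then show ?thesis
      by (simp add: X)
  qed
qed (auto simp: Pow_def)

lemma theta_eq_if_absolutely_continuous:
  assumes \<nu>: "\<nu> \<in> inv_measures" and \<nu>': "\<nu>' \<in> inv_measures"
    and erg: "ergodic (theta k \<nu>) (shift ^^ 2 ^ k)" and ac: "absolutely_continuous \<nu> \<nu>'"
  shows "theta k \<nu>' = theta k \<nu>"
proof (rule ergodic_absolutely_continuous_eq[OF erg prob_space_theta[OF \<nu>] prob_space_theta[OF \<nu>']])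
  show "absolutely_continuous (theta k \<nu>) (theta k \<nu>')"
    unfolding absolutely_continuous_def
  proof
    fix B assume "B \<in> null_sets (theta k \<nu>)"
    then have B: "B \<in> sets ZS" and "2 ^ k * emeasure \<nu> (B \<times> A0 k) = 0"
      using emeasure_theta[OF \<nu>, of B k] by (auto simp: null_sets_def)
    then have "emeasure \<nu> (B \<times> A0 k) = 0"
      by simp
    then have "emeasure \<nu>' (B \<times> A0 k) = 0"
      using absolutely_continuousD[OF ac] B \<nu> by (simp add: inv_measuresD pair_measureI)
    then show "B \<in> null_sets (theta k \<nu>')"
      using B emeasure_theta[OF \<nu>' B] by auto
  qed
qed (simp_all add: theta_shift_invariant[OF \<nu>'])

lemma uniform_measure_in_inv_measures:
  assumes \<nu>: "\<nu> \<in> inv_measures" and A: "A \<in> sets \<nu>" "SO -` A = A" "emeasure \<nu> A \<noteq> 0"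
  shows "uniform_measure \<nu> A \<in> inv_measures"
proof -
  interpret prob_space \<nu>
    using inv_measuresD(1)[OF \<nu>] .
  let ?\<mu> = "uniform_measure \<nu> A"
  have "distr ?\<mu> ?\<mu> SO = ?\<mu>"
  proof (rule measure_eqI)
    fix G assume "G \<in> sets (distr ?\<mu> ?\<mu> SO)"
    then have G: "G \<in> sets \<nu>"
      by simp
    then have "SO -` G \<in> sets \<nu>"
      using measurable_sets[OF measurable_SO_inv_measures[OF \<nu>] G] by (simp add: inv_measuresD[OF \<nu>])
    have "emeasure (distr ?\<mu> ?\<mu> SO) G = emeasure ?\<mu> (SO -` G)"
      using emeasure_distr[of SO ?\<mu> ?\<mu> G] measurable_SO_inv_measures[OF \<nu>] G
      by (simp add: inv_measuresD[OF \<nu>])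
    also have "\<dots> = emeasure \<nu> (SO -` (A \<inter> G)) / emeasure \<nu> A"
      using A \<open>SO -` G \<in> sets \<nu>\<close> by (simp add: vimage_Int)
    also have "\<dots> = emeasure ?\<mu> G"
      using A G emeasure_vimage_SO[OF \<nu>, of "A \<inter> G"] by (simp add: inv_measuresD[OF \<nu>] vimage_Int)
    finally show "emeasure (distr ?\<mu> ?\<mu> SO) G = emeasure ?\<mu> G" .
  qed simp
  then show ?thesis
    using A \<nu> prob_space_uniform_measure[of \<nu> A] by (simp add: inv_measures_def emeasure_finite)
qed

lemma ergodic_if_ergodic_theta:
  assumes \<nu>: "\<nu> \<in> inv_measures" and erg: "\<And>k. ergodic (theta k \<nu>) (shift ^^ 2 ^ k)"
  shows "ergodic \<nu> SO"
  unfolding ergodic_def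
proof (intro conjI ballI impI)
  show "SO \<in> \<nu> \<rightarrow>\<^sub>M \<nu>" "distr \<nu> \<nu> SO = \<nu>"
    using \<nu> by (simp_all add: measurable_SO_inv_measures inv_measuresD)
  fix A assume A: "A \<in> sets \<nu>" "SO -` A \<inter> space \<nu> = A"
  show "emeasure \<nu> A = 0 \<or> emeasure \<nu> A = 1"
  proof (cases "emeasure \<nu> A = 0")
    case False
    let ?\<mu> = "uniform_measure \<nu> A"
    have \<mu>: "?\<mu> \<in> inv_measures"
      using A False \<nu> by (intro uniform_measure_in_inv_measures) (simp_all add: inv_measuresD)
    have [measurable]: "A \<in> sets \<nu>"
      using A(1) .
    have "absolutely_continuous \<nu> ?\<mu>"
      unfolding uniform_measure_def by (intro absolutely_continuousI_density) measurable
    then have "?\<mu> = \<nu>"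
      using inv_measures_eqI[OF \<mu> \<nu>] theta_eq_if_absolutely_continuous[OF \<nu> \<mu> erg] by blast
    then show ?thesis
      using emeasure_uniform_measure_1[OF False]
        finite_measure.emeasure_finite[OF prob_space.finite_measure[OF inv_measuresD(1)[OF \<nu>]]]
      by simp
  qed simp
qed

theorem lemma3:
  assumes "\<nu> \<in> inv_measures"
  shows "(ergodic \<nu> SO \<longleftrightarrow> (\<forall>k. ergodic (theta k \<nu>) (shift ^^ (2 ^ k))))
       \<and> ((\<forall>k. ergodic (theta k \<nu>) (shift ^^ (2 ^ k)))
            \<longleftrightarrow> (\<exists>n. \<forall>k\<ge>n. ergodic (theta k \<nu>) (shift ^^ (2 ^ k))))"
proof -
  have "(\<forall>k. ergodic (theta k \<nu>) (shift ^^ 2 ^ k))" if tail: "\<forall>k\<ge>n. ergodic (theta k \<nu>) (shift ^^ 2 ^ k)" for n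
  proof
    fix k
    obtain m where "k \<le> m" "ergodic (theta m \<nu>) (shift ^^ 2 ^ m)"
      using tail by (metis max.cobounded1 max.cobounded2)
    then show "ergodic (theta k \<nu>) (shift ^^ 2 ^ k)"
      by (induction rule: inc_induct) (use ergodic_theta_if_ergodic_theta_Suc[OF assms] in blast)+
  qed
  then show ?thesis
    using ergodic_theta_if_ergodic[OF assms] ergodic_if_ergodic_theta[OF assms] by blast
qed

end
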